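(* Let $\lambda_\operatorname{loc} \geq 0$ be a constant and $X$ be a $(s,k,K)$-two layer system such that all the links are $\lambda_\operatorname{loc}$-expanders. Also, let $A \subseteq E$ be a non-empty set, $0< \mu <1$ be a constant and $U \subseteq V_{\mu \text{-small}}$ be a set. Then $$(s-1) \left(\lambda_\operatorname{loc} + \mu \right) \sum_{i=1}^k i w (A_U^i) \geq \sum_{v \in U} m_v (A_v,A_v).$$
   Context: A $(s,k,K)$-two layer system is $X=(V,E,T)$ where $V$ is a finite set, $E \subseteq 2^V$ with $|\tau|=k$ for all $\tau\in E$ and $\bigcup_{\tau\in E}\tau = V$, $T\subseteq 2^E$ with $|\sigma|=K$ for all $\sigma\in T$ and $\bigcup_{\sigma\in T}\sigma=E$; writing $v\in\sigma$ if $v\in\tau$ for some $\tau\in\sigma$, one has $2\le |\{\tau\in\sigma : v\in\tau\}|\le s$ for every $\sigma\in T$ and $v\in\sigma$. A positive weight $w:T\to\mathbb{R}_+$ is fixed and extended by $w(\tau)=\sum_{\sigma\in T,\tau\in\sigma} w(\sigma)$ for $\tau\in E$, and $w(A)=\sum_{\eta\in A} w(\eta)$ for sets $A$. For $v\in V$, the link $X_v$ is the weighted graph with vertex set $E_v=\{\tau\in E: v\in\tau\}$, edges $\{\tau_1,\tau_2\}$ with $\tau_1\neq\tau_2$ in $E_v$ and some $\sigma\in T$ containing both, and edge weight $m_v(\{\tau_1,\tau_2\})=\sum_{\sigma\in T,\tau_1,\tau_2\in\sigma} w(\sigma)$; for a vertex $\tau$, $m_v(\tau)$ is the sum of the weights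 of the edges containing $\tau$, $m_v(B)=\sum_{\tau\in B} m_v(\tau)$, and $m_v(B_1,B_2)=\sum_{(\tau_1,\tau_2)\in B_1\times B_2,\ \{\tau_1,\tau_2\}\text{ an edge}} m_v(\{\tau_1,\tau_2\})$. For $A\subseteq E$, $A_v = A\cap E_v$, and for $U\subseteq V$, $A_U^i=\{\tau\in A : |U\cap\tau| = i\}$. A vertex $v$ is $\mu$-small with respect to $A$ if $m_v(A_v)/m_v(E_v)<\mu$, and $V_{\mu\text{-small}}$ is the set of such vertices. A weighted graph $G$ with vertex set $W$ and weight $m$ is a $\lambda$-expander if $1-h_G\le\lambda$, where $h_G=\min_{\emptyset\neq U'\subsetneqq W} \frac{m(U',W\setminus U')\,m(W)}{m(U')\,m(W\setminus U')}$. *)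

theory Defs
  imports Complex_Main
begin

(* vertices of type 'a; E :: 'a set set (faces); T :: 'a set set set (top faces) *)

definition vin :: "'a \<Rightarrow> 'a set set \<Rightarrow> bool" where
  "vin v \<sigma> \<longleftrightarrow> (\<exists>\<tau>\<in>\<sigma>. v \<in> \<tau>)"

definition two_layer_system ::
  "nat \<Rightarrow> nat \<Rightarrow> nat \<Rightarrow> 'a set \<Rightarrow> 'a set set \<Rightarrow> 'a set set set \<Rightarrow> bool" where
  "two_layer_system s k K V E T \<longleftrightarrow>
     finite V \<and>
     E \<subseteq> Pow V \<and> (\<forall>\<tau>\<in>E. card \<tau> = k) \<and> \<Union>E = V \<and>
     T \<subseteq> Pow E \<and> (\<forall>\<sigma>\<in>T. card \<sigma> = K) \<and> \<Union>T = E \<and>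
     (\<forall>\<sigma>\<in>T. \<forall>v. vin v \<sigma> \<longrightarrow>
         2 \<le> card {\<tau>\<in>\<sigma>. v \<in> \<tau>} \<and> card {\<tau>\<in>\<sigma>. v \<in> \<tau>} \<le> s)"

definition wE :: "'a set set set \<Rightarrow> ('a set set \<Rightarrow> real) \<Rightarrow> 'a set \<Rightarrow> real" where
  "wE T w \<tau> = (\<Sum>\<sigma>\<in>{\<sigma>\<in>T. \<tau> \<in> \<sigma>}. w \<sigma>)"

definition wEset :: "'a set set set \<Rightarrow> ('a set set \<Rightarrow> real) \<Rightarrow> 'a set set \<Rightarrow> real" where
  "wEset T w A = (\<Sum>\<tau>\<in>A. wE T w \<tau>)"

definition Ev :: "'a set set \<Rightarrow> 'a \<Rightarrow> 'a set set" where
  "Ev E v = {\<tau>\<in>E. v \<in> \<tau>}"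

definition Alayer :: "'a set set \<Rightarrow> 'a set \<Rightarrow> nat \<Rightarrow> 'a set set" where
  "Alayer A U i = {\<tau>\<in>A. card (U \<inter> \<tau>) = i}"

definition link_adj :: "'a set set \<Rightarrow> 'a set set set \<Rightarrow> 'a \<Rightarrow> 'a set \<Rightarrow> 'a set \<Rightarrow> bool" where
  "link_adj E T v \<tau>1 \<tau>2 \<longleftrightarrow> \<tau>1 \<in> Ev E v \<and> \<tau>2 \<in> Ev E v \<and> \<tau>1 \<noteq> \<tau>2 \<and>
      (\<exists>\<sigma>\<in>T. \<tau>1 \<in> \<sigma> \<and> \<tau>2 \<in> \<sigma>)"

definition link_edge_w :: "'a set set set \<Rightarrow> ('a set set \<Rightarrow> real) \<Rightarrow> 'a set \<Rightarrow> 'a set \<Rightarrow> real" where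
  "link_edge_w T w \<tau>1 \<tau>2 = (\<Sum>\<sigma>\<in>{\<sigma>\<in>T. \<tau>1 \<in> \<sigma> \<and> \<tau>2 \<in> \<sigma>}. w \<sigma>)"

definition link_m :: "'a set set \<Rightarrow> 'a set set set \<Rightarrow> ('a set set \<Rightarrow> real) \<Rightarrow> 'a \<Rightarrow> 'a set \<Rightarrow> real" where
  "link_m E T w v \<tau> = (\<Sum>\<tau>'\<in>{\<tau>'\<in>Ev E v. link_adj E T v \<tau> \<tau>'}. link_edge_w T w \<tau> \<tau>')"

definition link_mset :: "'a set set \<Rightarrow> 'a set set set \<Rightarrow> ('a set set \<Rightarrow> real) \<Rightarrow> 'a \<Rightarrow> 'a set set \<Rightarrow> real" where
  "link_mset E T w v B = (\<Sum>\<tau>\<in>B. link_m E T w v \<tau>)"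

definition link_mpair :: "'a set set \<Rightarrow> 'a set set set \<Rightarrow> ('a set set \<Rightarrow> real) \<Rightarrow> 'a \<Rightarrow>
    'a set set \<Rightarrow> 'a set set \<Rightarrow> real" where
  "link_mpair E T w v B1 B2 =
     (\<Sum>p\<in>{p\<in>B1 \<times> B2. link_adj E T v (fst p) (snd p)}. link_edge_w T w (fst p) (snd p))"

definition link_h :: "'a set set \<Rightarrow> 'a set set set \<Rightarrow> ('a set set \<Rightarrow> real) \<Rightarrow> 'a \<Rightarrow> real" where
  "link_h E T w v = Min ((\<lambda>U'. link_mpair E T w v U' (Ev E v - U') * link_mset E T w v (Ev E v)
        / (link_mset E T w v U' * link_mset E T w v (Ev E v - U')))
      ` {U'. U' \<noteq> {} \<and> U' \<subset> Ev E v})"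

definition link_expander :: "'a set set \<Rightarrow> 'a set set set \<Rightarrow> ('a set set \<Rightarrow> real) \<Rightarrow> 'a \<Rightarrow> real \<Rightarrow> bool" where
  "link_expander E T w v lam \<longleftrightarrow> 1 - link_h E T w v \<le> lam"

definition small_vertices :: "'a set \<Rightarrow> 'a set set \<Rightarrow> 'a set set set \<Rightarrow> ('a set set \<Rightarrow> real) \<Rightarrow>
    real \<Rightarrow> 'a set set \<Rightarrow> 'a set" where
  "small_vertices V E T w \<mu> A =
     {v\<in>V. link_mset E T w v (A \<inter> Ev E v) / link_mset E T w v (Ev E v) < \<mu>}"

end

theory Submission
  imports Defs
begin

text \<open>
  Fix a vertex v of U and write B = A \<inter> E_v. Since v is \<mu>-small, B carries less than a
  \<mu>-fraction of the link weight, and since X_v is a \<lambda>-expander the cut m_v(B, E_v - B) is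
  large; together, the inner weight m_v(B, B) = m_v(B) - m_v(B, E_v - B) is at most
  (\<lambda> + \<mu>) m_v(B). Next, m_v(\<tau>) \<le> (s - 1) w(\<tau>), because a top face through \<tau> contains at
  most s - 1 further faces through v. Summing over v \<in> U counts every \<tau> \<in> A exactly
  |U \<inter> \<tau>| times, which is the layered sum on the left.
\<close>

lemma expansion_inner_bound:
  fixes a b c lam \<mu> :: real
  assumes "0 \<le> b" "0 \<le> c" "c \<le> a"
    and small: "a / (a + b) < \<mu>"
    and expander: "1 - c * (a + b) / (a * b) \<le> lam" and "0 \<le> lam"
  shows "a - c \<le> (lam + \<mu>) * a"
\<comment> \<open>With t = a/(a+b) and q the Cheeger ratio, c = q a (1 - t) and 1 - q (1 - t) \<le> max (1 - q) 0 + t.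
  If b = 0 then q = 0 by division by zero, so the expander hypothesis reads 1 \<le> lam.\<close>
proof (cases "a = 0 \<or> b = 0")
  case True
  then consider "a = 0" | "1 \<le> lam" "1 < \<mu>"
    using small expander by (cases "a = 0") auto
  then show ?thesis
  proof cases
    case 2
    then have "a \<le> lam * a" "0 \<le> \<mu> * a"
      using assms(2,3) by (simp_all add: mult_le_cancel_right1)
    then show ?thesis using assms(2) distrib_right[of lam \<mu> a] by linarith
  qed (use assms(2,3) in simp)
next
  case False
  then have "0 < a" "0 < b" using assms(1-3) by auto
  define t where "t = a / (a + b)"
  define q where "q = c * (a + b) / (a * b)"
  have t: "0 \<le> t" "t \<le> 1" "t < \<mu>" using \<open>0 < a\<close> \<open>0 < b\<close> small by (auto simp: t_def)
  have "1 - t = b / (a + b)" using \<open>0 < a\<close> \<open>0 < b\<close> by (simp add: t_def field_simps)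
  then have "c = q * a * (1 - t)" using \<open>0 < a\<close> \<open>0 < b\<close> by (simp add: q_def)
  then have "a - c = (1 - q * (1 - t)) * a" by (simp add: algebra_simps)
  moreover have "1 - q * (1 - t) \<le> lam + \<mu>"
  proof (cases "q \<le> 1")
    case True
    then have "q * t \<le> t" using mult_right_mono[of q 1 t] t by simp
    then show ?thesis using t expander[folded q_def] by (simp add: algebra_simps)
  next
    case False
    then have "1 - t \<le> q * (1 - t)" using mult_right_mono[of 1 q "1 - t"] t by simp
    then show ?thesis using t \<open>0 \<le> lam\<close> by linarith
  qed
  ultimately show ?thesis using \<open>0 < a\<close> by (simp add: mult_right_mono)
qed

lemma link_edge_w_nonneg: "\<forall>\<sigma>\<in>T. 0 \<le> w \<sigma> \<Longrightarrow> 0 \<le> link_edge_w T w \<tau>1 \<tau>2"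
  unfolding link_edge_w_def by (rule sum_nonneg) auto

lemma link_mpair_nonneg: "\<forall>\<sigma>\<in>T. 0 \<le> w \<sigma> \<Longrightarrow> 0 \<le> link_mpair E T w v B1 B2"
  unfolding link_mpair_def by (rule sum_nonneg) (simp add: link_edge_w_nonneg)

lemma link_m_nonneg: "\<forall>\<sigma>\<in>T. 0 \<le> w \<sigma> \<Longrightarrow> 0 \<le> link_m E T w v \<tau>"
  unfolding link_m_def by (rule sum_nonneg) (simp add: link_edge_w_nonneg)

lemma link_mset_nonneg: "\<forall>\<sigma>\<in>T. 0 \<le> w \<sigma> \<Longrightarrow> 0 \<le> link_mset E T w v B"
  unfolding link_mset_def by (rule sum_nonneg) (simp add: link_m_nonneg)

lemma link_mpair_eq_sum_neighbours:
  assumes "finite B1" "finite B2"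
  shows "link_mpair E T w v B1 B2 =
    (\<Sum>\<tau>\<in>B1. \<Sum>\<tau>'\<in>{\<tau>'\<in>B2. link_adj E T v \<tau> \<tau>'}. link_edge_w T w \<tau> \<tau>')"
proof -
  have "{p\<in>B1 \<times> B2. link_adj E T v (fst p) (snd p)} =
      Sigma B1 (\<lambda>\<tau>. {\<tau>'\<in>B2. link_adj E T v \<tau> \<tau>'})"
    by auto
  then show ?thesis
    unfolding link_mpair_def using assms by (simp add: sum.Sigma split_def)
qed

lemma link_mpair_inner_add_cut:
  assumes "finite (Ev E v)" "B \<subseteq> Ev E v"
  shows "link_mpair E T w v B B + link_mpair E T w v B (Ev E v - B) = link_mset E T w v B"
proof -
  have "finite B" using assms finite_subset by blast
  have "(\<Sum>\<tau>'\<in>{\<tau>'\<in>B. link_adj E T v \<tau> \<tau>'}. link_edge_w T w \<tau> \<tau>') +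
      (\<Sum>\<tau>'\<in>{\<tau>'\<in>Ev E v - B. link_adj E T v \<tau> \<tau>'}. link_edge_w T w \<tau> \<tau>') = link_m E T w v \<tau>"
    for \<tau>
  proof -
    have "{\<tau>'\<in>Ev E v. link_adj E T v \<tau> \<tau>'} =
        {\<tau>'\<in>B. link_adj E T v \<tau> \<tau>'} \<union> {\<tau>'\<in>Ev E v - B. link_adj E T v \<tau> \<tau>'}"
      using assms(2) by auto
    then show ?thesis
      unfolding link_m_def using assms \<open>finite B\<close> by (simp add: sum.union_disjoint Int_def)
  qed
  then show ?thesis using assms \<open>finite B\<close>
    by (simp add: link_mpair_eq_sum_neighbours link_mset_def sum.distrib[symmetric])
qed

lemma link_expander_cut_ratio:
  assumes "link_expander E T w v lam" "finite (Ev E v)" "B \<noteq> {}" "B \<subset> Ev E v"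
  shows "1 - link_mpair E T w v B (Ev E v - B) * link_mset E T w v (Ev E v)
      / (link_mset E T w v B * link_mset E T w v (Ev E v - B)) \<le> lam"
proof -
  have "finite {U'. U' \<noteq> {} \<and> U' \<subset> Ev E v}"
    by (rule finite_subset[of _ "Pow (Ev E v)"]) (use assms(2) in auto)
  then have "link_h E T w v \<le> link_mpair E T w v B (Ev E v - B) * link_mset E T w v (Ev E v)
      / (link_mset E T w v B * link_mset E T w v (Ev E v - B))"
    unfolding link_h_def using assms(3,4) by (intro Min_le) auto
  then show ?thesis using assms(1) unfolding link_expander_def by linarith
qed

lemma link_mpair_inner_le:
  assumes "finite (Ev E v)" "\<forall>\<sigma>\<in>T. 0 \<le> w \<sigma>" "B \<subseteq> Ev E v"
    and "0 \<le> lam" "link_expander E T w v lam"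
    and small: "link_mset E T w v B / link_mset E T w v (Ev E v) < \<mu>"
  shows "link_mpair E T w v B B \<le> (lam + \<mu>) * link_mset E T w v B"
proof -
  let ?a = "link_mset E T w v B" and ?b = "link_mset E T w v (Ev E v - B)"
    and ?c = "link_mpair E T w v B (Ev E v - B)"
  have inner: "link_mpair E T w v B B = ?a - ?c"
    using link_mpair_inner_add_cut[OF assms(1,3), of T w] by linarith
  have total: "link_mset E T w v (Ev E v) = ?a + ?b"
    unfolding link_mset_def using sum.subset_diff[OF assms(3,1)] by (simp add: add.commute)
  have nonneg: "0 \<le> ?a" "0 \<le> ?b" "0 \<le> ?c" "?c \<le> ?a"
    using assms(2) inner link_mpair_nonneg[of T w E v B B]
    by (simp_all add: link_mset_nonneg link_mpair_nonneg)
  consider "B = {}" | "B = Ev E v" | "B \<noteq> {}" "B \<subset> Ev E v"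
    using assms(3) by blast
  then show ?thesis
  proof cases
    case 1
    then show ?thesis by (simp add: link_mpair_def link_mset_def)
  next
    case 2
    then have "?c = 0" by (simp add: link_mpair_def)
    moreover have "?a = 0 \<or> 1 \<le> lam + \<mu>" using small 2 assms(4) by (cases "?a = 0") auto
    ultimately show ?thesis using inner nonneg mult_right_mono[of 1 "lam + \<mu>" ?a] by auto
  next
    case 3
    show ?thesis
      unfolding inner
      by (rule expansion_inner_bound[OF nonneg(2-4) small[unfolded total]
            link_expander_cut_ratio[OF assms(5,1) 3, unfolded total] assms(4)])
  qed
qed

lemma two_layer_system_finite:
  assumes "two_layer_system s k K V E T"
  shows "finite V" "finite E" "finite T"
proof -
  show "finite V" using assms unfolding two_layer_system_def by simp
  then show "finite E" using assms unfolding two_layer_system_def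
    by (meson finite_Pow_iff finite_subset)
  then show "finite T" using assms unfolding two_layer_system_def
    by (meson finite_Pow_iff finite_subset)
qed

lemma link_m_eq_sum_top_faces:
  assumes "finite T" "finite (Ev E v)" "\<forall>\<sigma>\<in>T. \<sigma> \<subseteq> E" "\<tau> \<in> Ev E v"
  shows "link_m E T w v \<tau> =
    (\<Sum>\<sigma>\<in>{\<sigma>\<in>T. \<tau> \<in> \<sigma>}. real (card {\<tau>'\<in>\<sigma>. v \<in> \<tau>' \<and> \<tau>' \<noteq> \<tau>}) * w \<sigma>)"
proof -
  have "link_m E T w v \<tau> = (\<Sum>\<tau>'\<in>Ev E v. \<Sum>\<sigma>\<in>{\<sigma>\<in>T. \<tau> \<in> \<sigma> \<and> \<tau>' \<in> \<sigma> \<and> \<tau>' \<noteq> \<tau>}. w \<sigma>)"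
    unfolding link_m_def sum.inter_filter[OF assms(2)]
  proof (rule sum.cong[OF refl])
    fix \<tau>' assume "\<tau>' \<in> Ev E v"
    show "(if link_adj E T v \<tau> \<tau>' then link_edge_w T w \<tau> \<tau>' else 0) =
        (\<Sum>\<sigma>\<in>{\<sigma>\<in>T. \<tau> \<in> \<sigma> \<and> \<tau>' \<in> \<sigma> \<and> \<tau>' \<noteq> \<tau>}. w \<sigma>)"
    proof (cases "link_adj E T v \<tau> \<tau>'")
      case True
      then have "\<tau>' \<noteq> \<tau>" by (auto simp: link_adj_def)
      with True show ?thesis by (simp add: link_edge_w_def)
    next
      case False
      then have no_face: "{\<sigma>\<in>T. \<tau> \<in> \<sigma> \<and> \<tau>' \<in> \<sigma> \<and> \<tau>' \<noteq> \<tau>} = {}"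
        using \<open>\<tau>' \<in> Ev E v\<close> assms(4) unfolding link_adj_def by blast
      show ?thesis unfolding no_face using False by simp
    qed
  qed
  also have "\<dots> = (\<Sum>\<sigma>\<in>T. \<Sum>\<tau>'\<in>{\<tau>'\<in>Ev E v. \<tau> \<in> \<sigma> \<and> \<tau>' \<in> \<sigma> \<and> \<tau>' \<noteq> \<tau>}. w \<sigma>)"
    by (rule sum.swap_restrict[OF assms(2,1)])
  also have "\<dots> = (\<Sum>\<sigma>\<in>T. if \<tau> \<in> \<sigma> then real (card {\<tau>'\<in>\<sigma>. v \<in> \<tau>' \<and> \<tau>' \<noteq> \<tau>}) * w \<sigma> else 0)"
  proof (rule sum.cong[OF refl])
    fix \<sigma> assume "\<sigma> \<in> T"
    then have "{\<tau>'\<in>Ev E v. \<tau> \<in> \<sigma> \<and> \<tau>' \<in> \<sigma> \<and> \<tau>' \<noteq> \<tau>} =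
        (if \<tau> \<in> \<sigma> then {\<tau>'\<in>\<sigma>. v \<in> \<tau>' \<and> \<tau>' \<noteq> \<tau>} else {})"
      using assms(3) by (auto simp: Ev_def)
    then show "(\<Sum>\<tau>'\<in>{\<tau>'\<in>Ev E v. \<tau> \<in> \<sigma> \<and> \<tau>' \<in> \<sigma> \<and> \<tau>' \<noteq> \<tau>}. w \<sigma>) =
        (if \<tau> \<in> \<sigma> then real (card {\<tau>'\<in>\<sigma>. v \<in> \<tau>' \<and> \<tau>' \<noteq> \<tau>}) * w \<sigma> else 0)"
      by simp
  qed
  also have "\<dots> = (\<Sum>\<sigma>\<in>{\<sigma>\<in>T. \<tau> \<in> \<sigma>}. real (card {\<tau>'\<in>\<sigma>. v \<in> \<tau>' \<and> \<tau>' \<noteq> \<tau>}) * w \<sigma>)"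
    by (rule sum.inter_filter[OF assms(1), symmetric])
  finally show ?thesis .
qed

lemma link_m_le_wE:
  assumes tls: "two_layer_system s k K V E T" and "\<forall>\<sigma>\<in>T. 0 \<le> w \<sigma>" "\<tau> \<in> Ev E v"
  shows "link_m E T w v \<tau> \<le> (real s - 1) * wE T w \<tau>"
proof -
  have TE: "\<forall>\<sigma>\<in>T. \<sigma> \<subseteq> E" using tls unfolding two_layer_system_def by blast
  have "finite (Ev E v)" using two_layer_system_finite(2)[OF tls] by (simp add: Ev_def)
  have degree: "real (card {\<tau>'\<in>\<sigma>. v \<in> \<tau>' \<and> \<tau>' \<noteq> \<tau>}) \<le> real s - 1"
    if "\<sigma> \<in> T" "\<tau> \<in> \<sigma>" for \<sigma>
  proof -
    define C where "C = {\<tau>'\<in>\<sigma>. v \<in> \<tau>'}"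
    have "\<tau> \<in> C" using that assms(3) by (simp add: C_def Ev_def)
    then have "vin v \<sigma>" by (auto simp: C_def vin_def)
    moreover have "\<forall>\<sigma>\<in>T. \<forall>v. vin v \<sigma> \<longrightarrow>
        2 \<le> card {\<tau>\<in>\<sigma>. v \<in> \<tau>} \<and> card {\<tau>\<in>\<sigma>. v \<in> \<tau>} \<le> s"
      using tls unfolding two_layer_system_def by blast
    ultimately have "2 \<le> card C" "card C \<le> s" using that(1) unfolding C_def by blast+
    moreover have "{\<tau>'\<in>\<sigma>. v \<in> \<tau>' \<and> \<tau>' \<noteq> \<tau>} = C - {\<tau>}" by (auto simp: C_def)
    ultimately show ?thesis using \<open>\<tau> \<in> C\<close> card.infinite[of C] by (simp add: of_nat_diff)
  qed
  have "link_m E T w v \<tau> \<le> (\<Sum>\<sigma>\<in>{\<sigma>\<in>T. \<tau> \<in> \<sigma>}. (real s - 1) * w \<sigma>)"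
    unfolding link_m_eq_sum_top_faces[OF two_layer_system_finite(3)[OF tls]
        \<open>finite (Ev E v)\<close> TE assms(3)]
    using degree assms(2) by (intro sum_mono mult_right_mono) auto
  then show ?thesis by (simp add: wE_def sum_distrib_left)
qed

lemma link_mset_le_wEset:
  assumes "two_layer_system s k K V E T" "\<forall>\<sigma>\<in>T. 0 \<le> w \<sigma>" "B \<subseteq> Ev E v"
  shows "link_mset E T w v B \<le> (real s - 1) * wEset T w B"
  unfolding link_mset_def wEset_def sum_distrib_left
  by (intro sum_mono link_m_le_wE[OF assms(1,2)]) (use assms(3) in blast)

lemma sum_stars_eq_sum_layers:
  fixes f :: "'a set \<Rightarrow> real"
  assumes "finite U" "finite A" "\<forall>\<tau>\<in>A. card (U \<inter> \<tau>) \<le> k"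
  shows "(\<Sum>v\<in>U. \<Sum>\<tau>\<in>{\<tau>\<in>A. v \<in> \<tau>}. f \<tau>) = (\<Sum>i=1..k. real i * (\<Sum>\<tau>\<in>Alayer A U i. f \<tau>))"
proof -
  have "(\<Sum>v\<in>U. \<Sum>\<tau>\<in>{\<tau>\<in>A. v \<in> \<tau>}. f \<tau>) = (\<Sum>\<tau>\<in>A. real (card (U \<inter> \<tau>)) * f \<tau>)"
    using sum.swap_restrict[OF assms(1,2), of "\<lambda>_ \<tau>. f \<tau>" "\<lambda>v \<tau>. v \<in> \<tau>"]
    by (simp add: Collect_conj_eq)
  also have "\<dots> = (\<Sum>i\<in>{0..k}. \<Sum>\<tau>\<in>Alayer A U i. real (card (U \<inter> \<tau>)) * f \<tau>)"
    unfolding Alayer_def using assms(2,3) by (intro sum.group[symmetric]) auto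
  also have "\<dots> = (\<Sum>i\<in>{0..k}. real i * (\<Sum>\<tau>\<in>Alayer A U i. f \<tau>))"
    by (simp add: Alayer_def sum_distrib_left)
  also have "\<dots> = (\<Sum>i=1..k. real i * (\<Sum>\<tau>\<in>Alayer A U i. f \<tau>))"
    by (simp add: sum.atLeast_Suc_atMost)
  finally show ?thesis .
qed

theorem lemma4p10:
  fixes s k K :: nat and V :: "'a set" and E :: "'a set set" and T :: "'a set set set"
    and w :: "'a set set \<Rightarrow> real" and lam \<mu> :: real and A :: "'a set set" and U :: "'a set"
  assumes "two_layer_system s k K V E T"
    and "\<forall>\<sigma>\<in>T. w \<sigma> > 0"
    and "lam \<ge> 0"
    and "\<forall>v\<in>V. link_expander E T w v lam"
    and "A \<subseteq> E" and "A \<noteq> {}"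
    and "0 < \<mu>" and "\<mu> < 1"
    and "U \<subseteq> small_vertices V E T w \<mu> A"
  shows "(real s - 1) * (lam + \<mu>) * (\<Sum>i=1..k. real i * wEset T w (Alayer A U i))
           \<ge> (\<Sum>v\<in>U. link_mpair E T w v (A \<inter> Ev E v) (A \<inter> Ev E v))"
proof -
  note tls = assms(1) and finite = two_layer_system_finite[OF assms(1)]
  have w_nonneg: "\<forall>\<sigma>\<in>T. 0 \<le> w \<sigma>" using assms(2) by (simp add: less_imp_le)
  have star: "A \<inter> Ev E v = {\<tau>\<in>A. v \<in> \<tau>}" for v using assms(5) by (auto simp: Ev_def)
  have per_vertex: "link_mpair E T w v (A \<inter> Ev E v) (A \<inter> Ev E v)
      \<le> (real s - 1) * (lam + \<mu>) * wEset T w {\<tau>\<in>A. v \<in> \<tau>}" if "v \<in> U" for v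
  proof -
    have "v \<in> V" "link_mset E T w v (A \<inter> Ev E v) / link_mset E T w v (Ev E v) < \<mu>"
      using that assms(9) by (auto simp: small_vertices_def)
    then have "link_mpair E T w v (A \<inter> Ev E v) (A \<inter> Ev E v)
        \<le> (lam + \<mu>) * link_mset E T w v (A \<inter> Ev E v)"
      using finite(2) w_nonneg assms(3,4) by (intro link_mpair_inner_le) (auto simp: Ev_def)
    also have "\<dots> \<le> (lam + \<mu>) * ((real s - 1) * wEset T w (A \<inter> Ev E v))"
      using assms(3,7) by (intro mult_left_mono link_mset_le_wEset[OF tls w_nonneg]) auto
    finally show ?thesis by (simp add: star mult_ac)
  qed
  have "card (U \<inter> \<tau>) \<le> k" if "\<tau> \<in> A" for \<tau>
  proof -
    have "\<tau> \<in> E" using that assms(5) by blast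
    then have "card \<tau> = k" "finite \<tau>"
      using tls finite(1) unfolding two_layer_system_def by (auto intro: finite_subset)
    then show ?thesis by (metis card_mono inf_le2)
  qed
  then have layers: "(\<Sum>v\<in>U. wEset T w {\<tau>\<in>A. v \<in> \<tau>}) = (\<Sum>i=1..k. real i * wEset T w (Alayer A U i))"
    unfolding wEset_def using assms(5,9) finite
    by (intro sum_stars_eq_sum_layers) (auto simp: small_vertices_def intro: finite_subset)
  have "(\<Sum>v\<in>U. link_mpair E T w v (A \<inter> Ev E v) (A \<inter> Ev E v))
      \<le> (\<Sum>v\<in>U. (real s - 1) * (lam + \<mu>) * wEset T w {\<tau>\<in>A. v \<in> \<tau>})"
    by (rule sum_mono) (rule per_vertex)
  also have "\<dots> = (real s - 1) * (lam + \<mu>) * (\<Sum>i=1..k. real i * wEset T w (Alayer A U i))"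
    by (simp add: sum_distrib_left[symmetric] layers)
  finally show ?thesis .
qed

end
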